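(* Let $\alpha,\beta,\beta'$ be blueprints, $\chi$ a formula, and $a_1,\dots,a_p,b_1,\dots,b_p$ addresses with $\{a_1,\dots,a_p\}=\{b_1,\dots,b_p\}$. If $\alpha\rhd^{a_1}_\chi\alpha_1\rhd^{a_2}_\chi\cdots\rhd^{a_p}_\chi\beta$ and $\alpha\rhd^{b_1}_\chi\alpha'_1\rhd^{b_2}_\chi\cdots\rhd^{b_p}_\chi\beta'$ for some intermediate blueprints, then $\beta=\beta'$.
   Context: Addresses are finite sequences of positive integers, ordered by the prefix order $\le$ ($a<b$: strict prefix), with concatenation $\cdot$ and empty address $\varepsilon$. A partial tree is a function whose domain is a set of addresses; for a partial tree $\pi$ and address $a$, $\pi|_a$ is the partial tree $c\mapsto\pi(a\cdot c)$ on $\{c: a\cdot c\in\mathrm{dom}(\pi)\}$. Let $\mathfrak S$ be the signature consisting of all formulas (arity 0) and, for each formula $\phi$, a binary symbol $@_\phi$. A blueprint is a finite partial tree $\alpha$ with values in $\mathfrak S$ such that whenever $\alpha(a)=@_\phi$, both $\alpha|_{a\cdot(1)}$ and $\alpha|_{a\cdot(2)}$ have non-empty domain. Notation: $\emptyset_{\mathbb B}$ is the empty blueprint; a formula $\phi$ also denotes the blueprint $\varepsilon\mapsto\phi$; for non-empty $\alpha_1,\alpha_2$, $@_\phi(\alpha_1,\alpha_2)$ is the blueprint $\alpha$ with $\alpha(\varepsilon)=@_\phi$, $\alpha|_{(1)}=\alpha_1$, $\alpha|_{(2)}=\alpha_2$; for a sequence $\bar a=(a_1,\dots,a_k)$ of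 pairwise incomparable addresses, $*_{\bar a}(\alpha_1,\dots,\alpha_k)$ is the blueprint of minimal domain whose restriction at each $a_i$ is $\alpha_i$; $*(\alpha_1,\dots,\alpha_k)=*_{((1),\dots,(k))}(\alpha_1,\dots,\alpha_k)$. Extraction $\alpha\rhd^a_\phi\beta$ is defined inductively: (1) $\phi\rhd^\varepsilon_\phi\emptyset_{\mathbb B}$; (2) if $\alpha\rhd^a_\phi\beta$ and $\gamma,\alpha$ are non-empty, then $@_\psi(\gamma,\alpha)\rhd^{(2)\cdot a}_\phi *(\gamma,\beta)$; (3) if $\alpha\rhd^a_\phi\beta$, $b\ne\varepsilon$ and $(b,c_1,\dots,c_k)$ are pairwise incomparable, then $*_{(b,c_1,\dots,c_k)}(\alpha,\gamma_1,\dots,\gamma_k)\rhd^{b\cdot a}_\phi *_{(b,c_1,\dots,c_k)}(\beta,\gamma_1,\dots,\gamma_k)$. *)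

theory Defs
  imports Main "HOL-Library.Sublist"
begin

text \<open>Formulas are an arbitrary type 'f. The signature symbols: formulas (arity 0)
  and, for each formula phi, a binary symbol App phi (written @_phi in the paper).\<close>
datatype 'f sym = Frm 'f | App 'f

type_synonym addr = "nat list"
type_synonym 'f ptree = "addr \<Rightarrow> 'f sym option"

definition is_addr :: "addr \<Rightarrow> bool" where
  "is_addr a \<longleftrightarrow> (\<forall>x\<in>set a. 0 < x)"

definition restr :: "'f ptree \<Rightarrow> addr \<Rightarrow> 'f ptree" where
  "restr \<pi> a = (\<lambda>c. \<pi> (a @ c))"

definition blueprint :: "'f ptree \<Rightarrow> bool" where
  "blueprint \<alpha> \<longleftrightarrow> finite (dom \<alpha>) \<and> (\<forall>a\<in>dom \<alpha>. is_addr a) \<and>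
     (\<forall>a \<phi>. \<alpha> a = Some (App \<phi>) \<longrightarrow>
        dom (restr \<alpha> (a @ [1])) \<noteq> {} \<and> dom (restr \<alpha> (a @ [2])) \<noteq> {})"

definition frm_bp :: "'f \<Rightarrow> 'f ptree" where
  "frm_bp \<phi> = [[] \<mapsto> Frm \<phi>]"

definition app_bp :: "'f \<Rightarrow> 'f ptree \<Rightarrow> 'f ptree \<Rightarrow> 'f ptree" where
  "app_bp \<psi> \<alpha>1 \<alpha>2 = (\<lambda>c. case c of [] \<Rightarrow> Some (App \<psi>)
       | x # d \<Rightarrow> (if x = 1 then \<alpha>1 d else if x = 2 then \<alpha>2 d else None))"

definition incomparable :: "addr list \<Rightarrow> bool" where
  "incomparable as \<longleftrightarrow>
     (\<forall>i<length as. \<forall>j<length as. i \<noteq> j \<longrightarrow> \<not> prefix (as ! i) (as ! j))"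

text \<open>The partial tree of minimal domain whose restriction at each as!i is \<alpha>s!i
  (for pairwise incomparable addresses).\<close>
definition star_at :: "addr list \<Rightarrow> 'f ptree list \<Rightarrow> 'f ptree" where
  "star_at as \<alpha>s = (\<lambda>c. case filter (\<lambda>i. prefix (as ! i) c) [0..<length as] of
       [] \<Rightarrow> None
     | i # _ \<Rightarrow> (\<alpha>s ! i) (drop (length (as ! i)) c))"

definition star :: "'f ptree list \<Rightarrow> 'f ptree" where
  "star \<alpha>s = star_at (map (\<lambda>i. [Suc i]) [0..<length \<alpha>s]) \<alpha>s"

inductive extr :: "'f ptree \<Rightarrow> addr \<Rightarrow> 'f \<Rightarrow> 'f ptree \<Rightarrow> bool" where
  base: "extr (frm_bp \<phi>) [] \<phi> Map.empty"
| app: "\<lbrakk> extr \<alpha> a \<phi> \<beta>; blueprint \<gamma>; dom \<gamma> \<noteq> {}; dom \<alpha> \<noteq> {} \<rbrakk>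
        \<Longrightarrow> extr (app_bp \<psi> \<gamma> \<alpha>) (2 # a) \<phi> (star [\<gamma>, \<beta>])"
| ctx: "\<lbrakk> extr \<alpha> a \<phi> \<beta>; b \<noteq> []; is_addr b; \<forall>c\<in>set cs. is_addr c;
          length \<gamma>s = length cs; \<forall>\<gamma>\<in>set \<gamma>s. blueprint \<gamma>;
          incomparable (b # cs) \<rbrakk>
        \<Longrightarrow> extr (star_at (b # cs) (\<alpha> # \<gamma>s)) (b @ a) \<phi> (star_at (b # cs) (\<beta> # \<gamma>s))"

inductive extr_chain :: "'f ptree \<Rightarrow> addr list \<Rightarrow> 'f \<Rightarrow> 'f ptree \<Rightarrow> bool" where
  nil: "extr_chain \<alpha> [] \<phi> \<alpha>"
| cons: "\<lbrakk> extr \<alpha> a \<phi> \<alpha>1; blueprint \<alpha>1; extr_chain \<alpha>1 as \<phi> \<beta> \<rbrakk>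
         \<Longrightarrow> extr_chain \<alpha> (a # as) \<phi> \<beta>"

end

theory Submission
  imports Defs
begin

text \<open>An extraction at address a deletes exactly the nodes on the path from the root to a
  and leaves the rest of the blueprint untouched. Hence a chain of extractions at a_1, ..., a_p
  deletes the nodes lying on some path to an a_i, and its result depends only on the set
  of the a_i.\<close>

definition prune :: "'f ptree \<Rightarrow> addr set \<Rightarrow> 'f ptree" where
  "prune \<alpha> A = (\<lambda>c. if \<exists>a\<in>A. prefix c a then None else \<alpha> c)"

lemma prune_empty [simp]: "prune \<alpha> {} = \<alpha>"
  by (simp add: prune_def)

lemma prune_prune: "prune (prune \<alpha> A) B = prune \<alpha> (A \<union> B)"
  by (auto simp: prune_def fun_eq_iff)

lemma filter_upt_0_Suc:
  "filter P [0..<Suc n] = (if P 0 then 0 # filter P [1..<Suc n] else filter P [1..<Suc n])"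
  by (subst upt_conv_Cons) auto

lemma star_at_Cons_prefix:
  assumes "prefix b c"
  shows "star_at (b # cs) (x # xs) c = x (drop (length b) c)"
  using assms by (simp add: star_at_def filter_upt_0_Suc del: upt_Suc)

lemma star_at_Cons_not_prefix:
  assumes "\<not> prefix b c"
  shows "star_at (b # cs) (x # xs) c = star_at (b # cs) (y # xs) c"
proof -
  let ?F = "filter (\<lambda>i. prefix ((b # cs) ! i) c) [1..<Suc (length cs)]"
  have F: "filter (\<lambda>i. prefix ((b # cs) ! i) c) [0..<Suc (length cs)] = ?F"
    using assms by (simp add: filter_upt_0_Suc del: upt_Suc)
  show ?thesis
  proof (cases ?F)
    case Nil
    then show ?thesis unfolding star_at_def length_Cons F by simp
  next
    case (Cons i l)
    then have "i \<in> set ?F" by simp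
    then have "i \<ge> 1" by (simp del: upt_Suc)
    then have "(x # xs) ! i = (y # xs) ! i" by (simp add: nth_Cons')
    then show ?thesis unfolding star_at_def length_Cons F Cons by simp
  qed
qed

text \<open>Strictly above the first address no address of an incomparable family is a prefix,
  so star_at is undefined there.\<close>
lemma star_at_strictly_above_head:
  assumes "incomparable (b # cs)" "prefix c b" "\<not> prefix b c"
  shows "star_at (b # cs) xs c = None"
proof -
  have "\<not> prefix ((b # cs) ! i) c" if i: "i < length (b # cs)" for i
  proof
    assume p: "prefix ((b # cs) ! i) c"
    show False
    proof (cases "i = 0")
      case True
      then show ?thesis using p assms(3) by simp
    next
      case False
      have "prefix ((b # cs) ! i) ((b # cs) ! 0)"
        using p assms(2) by (auto intro: prefix_order.trans)
      then show ?thesis using assms(1) i False unfolding incomparable_def by blast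
    qed
  qed
  then have "filter (\<lambda>i. prefix ((b # cs) ! i) c) [0..<length (b # cs)] = []"
    by (auto simp: filter_empty_conv simp del: upt_Suc length_Cons)
  then show ?thesis by (simp add: star_at_def)
qed

lemma extr_eq_prune: "extr \<alpha> a \<phi> \<beta> \<Longrightarrow> \<beta> = prune \<alpha> {a}"
proof (induction rule: extr.induct)
  case (base \<phi>)
  then show ?case by (auto simp: prune_def frm_bp_def fun_eq_iff)
next
  case (app \<alpha> a \<phi> \<beta> \<gamma> \<psi>)
  show ?case
  proof
    fix c
    show "star [\<gamma>, \<beta>] c = prune (app_bp \<psi> \<gamma> \<alpha>) {2 # a} c"
      using app.IH
      by (cases c) (auto simp: star_def star_at_def prune_def app_bp_def split: list.split)
  qed
next
  case (ctx \<alpha> a \<phi> \<beta> b cs \<gamma>s)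
  show ?case
  proof
    fix c
    show "star_at (b # cs) (\<beta> # \<gamma>s) c = prune (star_at (b # cs) (\<alpha> # \<gamma>s)) {b @ a} c"
    proof (cases "prefix b c")
      case True
      then obtain d where "c = b @ d" by (auto simp: prefix_def)
      then show ?thesis using True ctx.IH by (simp add: star_at_Cons_prefix prune_def)
    next
      case not_below: False
      show ?thesis
      proof (cases "prefix c (b @ a)")
        case True
        with not_below have "prefix c b" by (auto simp: prefix_append)
        then show ?thesis
          using not_below True star_at_strictly_above_head[OF ctx.hyps(7)]
          by (simp add: prune_def)
      next
        case False
        then show ?thesis
          using star_at_Cons_not_prefix[OF not_below] by (simp add: prune_def)
      qed
    qed
  qed
qed

lemma extr_chain_eq_prune: "extr_chain \<alpha> as \<phi> \<beta> \<Longrightarrow> \<beta> = prune \<alpha> (set as)"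
proof (induction rule: extr_chain.induct)
  case (cons \<alpha> a \<phi> \<alpha>1 as \<beta>)
  then show ?case using extr_eq_prune[OF cons.hyps(1)] by (simp add: prune_prune)
qed simp

theorem lemma2p14:
  fixes \<alpha> \<beta> \<beta>' :: "'f ptree" and \<chi> :: 'f and as bs :: "addr list"
  assumes "blueprint \<alpha>" and "blueprint \<beta>" and "blueprint \<beta>'"
    and "\<forall>a\<in>set as. is_addr a" and "\<forall>b\<in>set bs. is_addr b"
    and "length as = length bs" and "set as = set bs"
    and "extr_chain \<alpha> as \<chi> \<beta>" and "extr_chain \<alpha> bs \<chi> \<beta>'"
  shows "\<beta> = \<beta>'"
  using extr_chain_eq_prune[OF assms(8)] extr_chain_eq_prune[OF assms(9)] assms(7) by simp

end
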